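(* Let $x_0\in\mathbb{R}$, $r>0$, and let $F:(x_0-r,x_0+r)\to\mathbb{R}$ be of class $C^1$ with $F(x_0)=x_0$ and $|F'(x_0)|<1$. Then there exists $r_1\in(0,r)$ such that for every $x_1\in(x_0-r_1,x_0+r_1)$, the sequence defined by $x_{n+1}=F(x_n)$ has $\dim_BS(x_1)=0$, where $S(x_1)=\{x_n:n\ge1\}$.
   Context: For a bounded set $S\subset\mathbb{R}$ and $\varepsilon>0$, $S_\varepsilon=\{y: \mathrm{dist}(y,S)<\varepsilon\}$ and $|S_\varepsilon|$ is its Lebesgue measure. $\mathcal M^{*s}(S)=\limsup_{\varepsilon\to0}|S_\varepsilon|/\varepsilon^{1-s}$, $\mathcal M_*^{s}(S)=\liminf_{\varepsilon\to0}|S_\varepsilon|/\varepsilon^{1-s}$; $\overline{\dim}_BS=\inf\{s\ge0:\mathcal M^{*s}(S)=0\}$, $\underline{\dim}_BS=\inf\{s\ge0:\mathcal M_*^{s}(S)=0\}$, and $\dim_BS$ is their common value when equal. *)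

theory Defs
  imports "HOL-Analysis.Analysis"
begin

definition nbhd :: "real set \<Rightarrow> real \<Rightarrow> real set" where
  "nbhd S e = {y. \<exists>x\<in>S. dist y x < e}"

definition upper_mink :: "real \<Rightarrow> real set \<Rightarrow> ereal" where
  "upper_mink s S = Limsup (at_right 0) (\<lambda>e. ereal (measure lebesgue (nbhd S e) / e powr (1 - s)))"

definition lower_mink :: "real \<Rightarrow> real set \<Rightarrow> ereal" where
  "lower_mink s S = Liminf (at_right 0) (\<lambda>e. ereal (measure lebesgue (nbhd S e) / e powr (1 - s)))"

definition upper_box_dim :: "real set \<Rightarrow> real" where
  "upper_box_dim S = Inf {s. s \<ge> 0 \<and> upper_mink s S = 0}"

definition lower_box_dim :: "real set \<Rightarrow> real" where
  "lower_box_dim S = Inf {s. s \<ge> 0 \<and> lower_mink s S = 0}"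

definition has_box_dim :: "real set \<Rightarrow> real \<Rightarrow> bool" where
  "has_box_dim S d \<longleftrightarrow> upper_box_dim S = d \<and> lower_box_dim S = d"

end

theory Submission
  imports Defs "HOL-Real_Asymp.Real_Asymp"
begin

(* Idea: near an attracting fixed point x0 (|F'(x0)| < 1) the map F is a contraction
   towards x0, so every orbit starting close to x0 converges geometrically,
   |x_n - x0| <= c q^n with 0 < q < 1.  The e-neighbourhood of such an orbit is covered
   by the interval of radius 2e around x0 (all points with c q^n <= e) together with
   N ~ log(c/e)/log(1/q) intervals of length 2e, so its measure is O(e log(1/e)).
   Divided by e^(1-s) this tends to 0 for every s > 0, hence all Minkowski contents of
   positive order vanish and both box dimensions are 0.
   The file first treats this measure estimate for arbitrary geometrically convergent
   sequences (ending in geometric_orbit_box_dim), then shows via the mean value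
   inequality that a C^1 map is contracting on a small ball around an attracting fixed
   point, derives the geometric bound for its orbits, and combines the two. *)

lemma open_nbhd: "open (nbhd S e)"
proof -
  have "nbhd S e = (\<Union>z\<in>S. ball z e)"
    by (auto simp: nbhd_def ball_def dist_commute)
  then show ?thesis by auto
qed

lemma geometric_threshold:
  fixes c q e :: real
  assumes "0 < q" "q < 1" "0 < e" "e < c"
  obtains N :: nat where "c * q ^ N \<le> e" "real N \<le> ln (c/e) / ln (1/q) + 1"
proof
  define L where "L = ln (1/q)"
  have L: "L > 0" using assms by (simp add: L_def)
  define N where "N = nat \<lceil>ln (c/e) / L\<rceil>"
  have lce: "ln (c/e) > 0" using assms by simp
  have N_ge: "real N \<ge> ln (c/e) / L" unfolding N_def by linarith
  show "real N \<le> ln (c/e) / ln (1/q) + 1"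
    using lce L of_int_ceiling_le_add_one[of "ln (c/e) / L"]
    by (simp add: N_def L_def of_nat_nat)
  have "q ^ N = exp (- (real N * L))" using assms
    by (simp add: L_def ln_div powr_realpow[symmetric] powr_def)
  also have "\<dots> \<le> exp (- ln (c/e))" using N_ge L by (simp add: field_simps)
  also have "\<dots> = e / c" using assms by (simp add: exp_minus)
  finally show "c * q ^ N \<le> e" using assms by (simp add: field_simps)
qed

lemma nbhd_tail_cover:
  fixes x :: "nat \<Rightarrow> real"
  assumes tail: "\<And>n. n \<ge> N \<Longrightarrow> \<bar>x n - x0\<bar> \<le> e"
  shows "nbhd (range x) e \<subseteq> {x0-2*e..x0+2*e} \<union> (\<Union>n\<in>{..<N}. {x n - e..x n + e})"
proof
  fix y assume "y \<in> nbhd (range x) e"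
  then obtain n where yn: "\<bar>y - x n\<bar> < e" by (auto simp: nbhd_def dist_real_def)
  show "y \<in> {x0-2*e..x0+2*e} \<union> (\<Union>n\<in>{..<N}. {x n - e..x n + e})"
  proof (cases "n < N")
    case True
    then show ?thesis using yn by (intro UnI2 UN_I[of n]) auto
  next
    case False
    then show ?thesis using yn tail[of n] by auto
  qed
qed

lemma measure_nbhd_geometric:
  fixes x :: "nat \<Rightarrow> real"
  assumes q: "0 < q" "q < 1" and bnd: "\<And>n. \<bar>x n - x0\<bar> \<le> c * q ^ n"
    and e: "0 < e" "e < c"
  shows "measure lebesgue (nbhd (range x) e) \<le> 4*e + 2 * (ln (c/e)/ln (1/q) + 1) * e"
proof -
  obtain N where N: "c * q ^ N \<le> e" "real N \<le> ln (c/e) / ln (1/q) + 1"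
    using geometric_threshold[OF q e] .
  have tail: "\<bar>x n - x0\<bar> \<le> e" if "n \<ge> N" for n
  proof -
    have "c * q ^ n \<le> c * q ^ N"
      using that q e by (intro mult_left_mono power_decreasing) auto
    then show ?thesis using bnd[of n] N(1) by linarith
  qed
  define B where "B = {x0-2*e..x0+2*e} \<union> (\<Union>n\<in>{..<N}. {x n - e..x n + e})"
  have B: "B \<in> lmeasurable" unfolding B_def
    by (intro lmeasurable_compact compact_Un compact_UN) auto
  have "measure lebesgue (nbhd (range x) e) \<le> measure lebesgue B"
    using nbhd_tail_cover[OF tail] B
    by (intro measure_mono_fmeasurable) (auto simp: B_def open_nbhd borel_open)
  also have "\<dots> \<le> measure lebesgue {x0-2*e..x0+2*e}
                   + measure lebesgue (\<Union>n\<in>{..<N}. {x n - e..x n + e})"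
    unfolding B_def by (rule measure_Un_le) auto
  also have "measure lebesgue (\<Union>n\<in>{..<N}. {x n - e..x n + e})
               \<le> (\<Sum>n\<in>{..<N}. measure lebesgue {x n - e..x n + e})"
    by (rule measure_UNION_le) auto
  also have "\<dots> = 2 * e * N" using e by simp
  also have "measure lebesgue {x0-2*e..x0+2*e} = 4 * e" using e by simp
  finally have "measure lebesgue (nbhd (range x) e) \<le> 4*e + 2*e*N" by simp
  also have "\<dots> \<le> 4*e + 2*e*(ln (c/e) / ln (1/q) + 1)" using N(2) e by simp
  finally show ?thesis by (simp add: mult_ac)
qed

lemma e_log_bound_little_o:
  fixes s c L :: real
  assumes "s > 0" "c > 0" "L > 0"
  shows "((\<lambda>e. (4*e + 2 * (ln (c/e)/L + 1) * e) / e powr (1-s)) \<longlongrightarrow> 0) (at_right 0)"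
  using assms by real_asymp

lemma Inf_eq_0_if_positives:
  fixes T :: "real set"
  assumes "{0<..} \<subseteq> T" "T \<subseteq> {0..}"
  shows "Inf T = 0"
proof -
  have ne: "T \<noteq> {}" using assms(1) by auto
  have bd: "bdd_below T" using assms(2) by (meson bdd_below_Ici bdd_below_mono)
  have "0 \<le> Inf T" using ne assms(2) by (intro cInf_greatest) auto
  moreover have "Inf T \<le> 0"
  proof (rule dense_ge)
    fix s :: real assume "0 < s"
    then show "Inf T \<le> s" using assms(1) bd by (intro cInf_lower) auto
  qed
  ultimately show ?thesis by simp
qed

lemma has_box_dim_0I:
  assumes lim: "\<And>s. s > 0 \<Longrightarrow>
      ((\<lambda>e. measure lebesgue (nbhd S e) / e powr (1 - s)) \<longlongrightarrow> 0) (at_right 0)"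
  shows "has_box_dim S 0"
proof -
  have lim': "((\<lambda>e. ereal (measure lebesgue (nbhd S e) / e powr (1 - s))) \<longlongrightarrow> 0)
      (at_right 0)" if "s > 0" for s
    using lim[OF that] by (simp add: zero_ereal_def tendsto_ereal)
  have "upper_box_dim S = 0" unfolding upper_box_dim_def upper_mink_def
    by (rule Inf_eq_0_if_positives) (auto intro!: lim_imp_Limsup lim')
  moreover have "lower_box_dim S = 0" unfolding lower_box_dim_def lower_mink_def
    by (rule Inf_eq_0_if_positives) (auto intro!: lim_imp_Liminf lim')
  ultimately show ?thesis by (simp add: has_box_dim_def)
qed

lemma geometric_orbit_box_dim:
  fixes x :: "nat \<Rightarrow> real"
  assumes c: "c > 0" and q: "0 < q" "q < 1" and bnd: "\<And>n. \<bar>x n - x0\<bar> \<le> c * q ^ n"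
  shows "has_box_dim (range x) 0"
proof (rule has_box_dim_0I)
  fix s :: real assume s: "s > 0"
  have L: "ln (1/q) > 0" using q by simp
  have small: "\<forall>\<^sub>F e in at_right (0::real). 0 < e \<and> e < c"
    using c by (auto simp: eventually_at_right intro!: exI[of _ c])
  show "((\<lambda>e. measure lebesgue (nbhd (range x) e) / e powr (1 - s)) \<longlongrightarrow> 0) (at_right 0)"
  proof (rule tendsto_sandwich[OF _ _ tendsto_const e_log_bound_little_o[OF s c L]])
    show "\<forall>\<^sub>F e in at_right 0. 0 \<le> measure lebesgue (nbhd (range x) e) / e powr (1 - s)"
      by (simp add: measure_nonneg)
    show "\<forall>\<^sub>F e in at_right 0. measure lebesgue (nbhd (range x) e) / e powr (1 - s)
          \<le> (4*e + 2 * (ln (c/e)/ln (1/q) + 1) * e) / e powr (1-s)"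
      using small
      by eventually_elim (intro divide_right_mono measure_nbhd_geometric[OF q bnd], auto)
  qed
qed

text \<open>The proof bounds \<open>|F'|\<close> by \<open>q = (|F'(x0)|+1)/2\<close> near
  \<open>x0\<close> (continuity of \<open>F'\<close>) and applies the mean value inequality.\<close>
lemma attracting_fixpoint_contraction:
  fixes F :: "real \<Rightarrow> real"
  assumes "r > 0" and C1: "F C1_differentiable_on {x0 - r<..<x0 + r}"
    and fixp: "F x0 = x0" and attr: "\<bar>deriv F x0\<bar> < 1"
  obtains r1 q where "0 < r1" "r1 < r" "0 < q" "q < 1"
    "\<And>y. \<bar>y - x0\<bar> \<le> r1 \<Longrightarrow> \<bar>F y - x0\<bar> \<le> q * \<bar>y - x0\<bar>"
proof -
  define U where "U = {x0 - r<..<x0 + r}"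
  obtain D where D_vec: "\<And>x. x \<in> U \<Longrightarrow> (F has_vector_derivative D x) (at x)"
    and D_cont: "continuous_on U D"
    using C1 unfolding C1_differentiable_on_def U_def by blast
  have D: "(F has_real_derivative D x) (at x)" if "x \<in> U" for x
    using D_vec[OF that] by (simp add: has_real_derivative_iff_has_vector_derivative)
  have x0U: "x0 \<in> U" using \<open>r > 0\<close> by (simp add: U_def)
  have D0: "\<bar>D x0\<bar> < 1" using attr DERIV_imp_deriv[OF D[OF x0U]] by simp
  have "isCont D x0"
    using D_cont x0U by (simp add: U_def continuous_on_eq_continuous_at)
  then obtain d where d: "d > 0"
    and dD: "\<And>x. dist x x0 < d \<Longrightarrow> dist (D x) (D x0) < (1 - \<bar>D x0\<bar>)/2"
    using D0 unfolding continuous_at_eps_delta by (metis diff_gt_0_iff_gt half_gt_zero)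
  define q where "q = (\<bar>D x0\<bar> + 1)/2"
  define r1 where "r1 = min d r / 2"
  have r1: "0 < r1" "r1 < r" "r1 < d" using d \<open>r > 0\<close> by (auto simp: r1_def)
  have q: "0 < q" "q < 1" using D0 by (auto simp: q_def)
  have in_U: "y \<in> U" if "y \<in> cball x0 r1" for y
  proof -
    have "\<bar>y - x0\<bar> \<le> r1" using that by (simp add: dist_real_def abs_minus_commute)
    then show ?thesis using r1 unfolding U_def by (simp add: abs_le_iff)
  qed
  have D_ball: "(F has_field_derivative D y) (at y within cball x0 r1)" if "y \<in> cball x0 r1" for y
    using D[OF in_U[OF that]] by (rule has_field_derivative_at_within)
  have D_bound: "norm (D y) \<le> q" if "y \<in> cball x0 r1" for y
  proof -
    have "dist y x0 < d" using that r1 by (simp add: dist_commute)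
    then have "\<bar>D y - D x0\<bar> < (1 - \<bar>D x0\<bar>)/2" using dD by (simp add: dist_real_def)
    moreover have "\<bar>D y\<bar> \<le> \<bar>D y - D x0\<bar> + \<bar>D x0\<bar>"
      using abs_triangle_ineq[of "D y - D x0" "D x0"] by simp
    ultimately show ?thesis by (simp add: q_def)
  qed
  have contr: "\<bar>F y - x0\<bar> \<le> q * \<bar>y - x0\<bar>" if "\<bar>y - x0\<bar> \<le> r1" for y
  proof -
    have "y \<in> cball x0 r1" using that by (simp add: dist_real_def abs_minus_commute)
    then have "norm (F y - F x0) \<le> q * norm (y - x0)"
      using r1 by (intro field_differentiable_bound[OF convex_cball D_ball D_bound]) auto
    then show ?thesis using fixp by simp
  qed
  show ?thesis by (rule that[OF r1(1,2) q contr])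
qed

lemma contraction_orbit_geometric:
  fixes F :: "real \<Rightarrow> real"
  assumes contr: "\<And>y. \<bar>y - a\<bar> \<le> R \<Longrightarrow> \<bar>F y - a\<bar> \<le> q * \<bar>y - a\<bar>"
    and q: "0 \<le> q" "q \<le> 1" and x1: "\<bar>x1 - a\<bar> \<le> R"
  shows "\<bar>(F ^^ n) x1 - a\<bar> \<le> R * q ^ n"
proof (induction n)
  case 0
  then show ?case using x1 by simp
next
  case (Suc n)
  have "R * q ^ n \<le> R * 1"
    using x1 q by (intro mult_left_mono power_le_one) auto
  then have "\<bar>F ((F ^^ n) x1) - a\<bar> \<le> q * \<bar>(F ^^ n) x1 - a\<bar>"
    using Suc by (intro contr) simp
  also have "\<dots> \<le> q * (R * q ^ n)" using Suc q by (intro mult_left_mono) auto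
  finally show ?case by (simp add: mult_ac)
qed

theorem theorem5:
  fixes F :: "real \<Rightarrow> real" and x0 r :: real
  assumes "r > 0"
    and "F C1_differentiable_on {x0 - r<..<x0 + r}"
    and "F x0 = x0"
    and "\<bar>deriv F x0\<bar> < 1"
  shows "\<exists>r1. 0 < r1 \<and> r1 < r \<and>
           (\<forall>x1\<in>{x0 - r1<..<x0 + r1}. has_box_dim {(F ^^ n) x1 | n. True} 0)"
proof -
  obtain r1 q where r1: "0 < r1" "r1 < r" and q: "0 < q" "q < 1"
    and contr: "\<And>y. \<bar>y - x0\<bar> \<le> r1 \<Longrightarrow> \<bar>F y - x0\<bar> \<le> q * \<bar>y - x0\<bar>"
    using attracting_fixpoint_contraction[OF assms] by blast
  have "has_box_dim {(F ^^ n) x1 | n. True} 0" if x1: "x1 \<in> {x0 - r1<..<x0 + r1}" for x1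
  proof -
    have "\<bar>(F ^^ n) x1 - x0\<bar> \<le> r1 * q ^ n" for n
      using x1 q by (intro contraction_orbit_geometric[OF contr]) auto
    then have "has_box_dim (range (\<lambda>n. (F ^^ n) x1)) 0"
      by (rule geometric_orbit_box_dim[OF r1(1) q])
    moreover have "{(F ^^ n) x1 | n. True} = range (\<lambda>n. (F ^^ n) x1)" by auto
    ultimately show ?thesis by simp
  qed
  with r1 show ?thesis by blast
qed

end
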